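(* For every integer $n>16$, the generalized Petersen graph $GP(n,3)$ is not $\ell$-distance-balanced for any integer $\ell$ with $3\le \ell<{\rm diam}(GP(n,3))$.
   Context: For a connected graph $G$ and $x,y\in V(G)$, $d_G(x,y)$ denotes the distance and ${\rm diam}(G)$ the diameter. Let $W_{xy}=\{w\in V(G): d_G(w,x)<d_G(w,y)\}$. $G$ is called $\ell$-distance-balanced if $|W_{xy}|=|W_{yx}|$ for every pair $x,y\in V(G)$ with $d_G(x,y)=\ell$. For integers $n\ge 3$ and $1\le k<n/2$, the generalized Petersen graph $GP(n,k)$ has vertex set $\{u_i: i\in\mathbb{Z}_n\}\cup\{v_i: i\in\mathbb{Z}_n\}$ and edge set $\{u_iu_{i+1}: i\in\mathbb{Z}_n\}\cup\{v_iv_{i+k}: i\in\mathbb{Z}_n\}\cup\{u_iv_i: i\in\mathbb{Z}_n\}$. *)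

theory Defs
  imports Main
begin

definition is_walk :: "('a \<Rightarrow> 'a \<Rightarrow> bool) \<Rightarrow> 'a set \<Rightarrow> 'a list \<Rightarrow> bool" where
  "is_walk E V xs \<longleftrightarrow> xs \<noteq> [] \<and> set xs \<subseteq> V \<and>
     (\<forall>i. Suc i < length xs \<longrightarrow> E (xs ! i) (xs ! Suc i))"

text \<open>Distance: least number of edges of a walk from x to y (graph is assumed connected).\<close>
definition gdist :: "'a set \<Rightarrow> ('a \<Rightarrow> 'a \<Rightarrow> bool) \<Rightarrow> 'a \<Rightarrow> 'a \<Rightarrow> nat" where
  "gdist V E x y = (LEAST m. \<exists>xs. is_walk E V xs \<and> hd xs = x \<and> last xs = y \<and> length xs = Suc m)"

definition gdiam :: "'a set \<Rightarrow> ('a \<Rightarrow> 'a \<Rightarrow> bool) \<Rightarrow> nat" where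
  "gdiam V E = Max {gdist V E x y | x y. x \<in> V \<and> y \<in> V}"

definition Wset :: "'a set \<Rightarrow> ('a \<Rightarrow> 'a \<Rightarrow> bool) \<Rightarrow> 'a \<Rightarrow> 'a \<Rightarrow> 'a set" where
  "Wset V E x y = {w \<in> V. gdist V E w x < gdist V E w y}"

definition distance_balanced_at :: "'a set \<Rightarrow> ('a \<Rightarrow> 'a \<Rightarrow> bool) \<Rightarrow> nat \<Rightarrow> bool" where
  "distance_balanced_at V E l \<longleftrightarrow>
     (\<forall>x\<in>V. \<forall>y\<in>V. gdist V E x y = l \<longrightarrow> card (Wset V E x y) = card (Wset V E y x))"

text \<open>Generalized Petersen graph GP(n,k). Vertex (False, i) is u_i, (True, i) is v_i, i < n.\<close>
definition gp_verts :: "nat \<Rightarrow> (bool \<times> nat) set" where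
  "gp_verts n = UNIV \<times> {0..<n}"

definition gp_edge1 :: "nat \<Rightarrow> nat \<Rightarrow> bool \<times> nat \<Rightarrow> bool \<times> nat \<Rightarrow> bool" where
  "gp_edge1 n k x y \<longleftrightarrow>
     (x = (False, snd x) \<and> y = (False, (snd x + 1) mod n)) \<or>
     (x = (True, snd x) \<and> y = (True, (snd x + k) mod n)) \<or>
     (x = (False, snd x) \<and> y = (True, snd x))"

definition gp_adj :: "nat \<Rightarrow> nat \<Rightarrow> bool \<times> nat \<Rightarrow> bool \<times> nat \<Rightarrow> bool" where
  "gp_adj n k x y \<longleftrightarrow> x \<in> gp_verts n \<and> y \<in> gp_verts n \<and> (gp_edge1 n k x y \<or> gp_edge1 n k y x)"

end

theory Submission
  imports Defs
begin

text \<open>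
  In \<open>GP(n,3)\<close> with \<open>n \<ge> 16\<close> the distance from \<open>(p,i)\<close> to \<open>(q,i+d)\<close> is
  \<open>min (g d) (g (n - d))\<close>, where \<open>g\<close> is the corresponding distance in the infinite graph
  \<open>GP(\<int>,3)\<close>; this is proved by checking that the formula is a potential which grows by at most
  one along edges and can be decreased from every vertex other than the source.

  For \<open>x = u\<^sub>0\<close> and \<open>y = v\<^sub>j\<close>, \<open>|W\<^sub>x\<^sub>y| - |W\<^sub>y\<^sub>x|\<close> is the sum over all vertices
  \<open>w = (p,t)\<close> of \<open>sgn (d(w,y) - d(w,x))\<close>. Since \<open>g a = a/3 + O(1)\<close>, each sign equals the sign
  of the difference of the cycle distances from \<open>t\<close> to \<open>j\<close> and to \<open>0\<close>, and these signs cancel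
  by the symmetry \<open>t \<mapsto> j - t\<close>; the exceptions lie in two windows of width 8 around \<open>j/2\<close>
  and \<open>(n+j)/2\<close>, the second being the first one for \<open>n - j\<close> by the reflection \<open>t \<mapsto> -t\<close>.
  A window sum is invariant under \<open>(n, j) \<mapsto> (n + 6, j + 6)\<close> and does not depend on \<open>n\<close>
  once \<open>n \<ge> j + 17\<close>, so finitely many evaluated window sums show \<open>|W\<^sub>x\<^sub>y| < |W\<^sub>y\<^sub>x|\<close>
  for suitable \<open>j\<close>. Since the diameter is at most \<open>n div 6 + 4\<close>, every \<open>3 \<le> l < diam\<close>
  is the distance of such a pair.
\<close>

section \<open>Graph distances from potentials\<close>

lemma walk_potential_le:
  assumes "is_walk E V xs" "f (hd xs) = (0::nat)" "\<And>a b. E a b \<Longrightarrow> f b \<le> f a + 1" "i < length xs"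
  shows "f (xs ! i) \<le> i"
  using assms(4)
proof (induction i)
  case 0
  then show ?case using assms(1,2) by (simp add: is_walk_def hd_conv_nth)
next
  case (Suc i)
  then have "E (xs ! i) (xs ! Suc i)" using assms(1) unfolding is_walk_def by auto
  then show ?case using Suc assms(3)[of "xs ! i" "xs ! Suc i"] by simp
qed

lemma walk_along_descent:
  assumes "x \<in> V" "\<And>v. v \<in> V \<Longrightarrow> v \<noteq> x \<Longrightarrow> \<exists>w\<in>V. E w v \<and> f w < (f v :: nat)" "v \<in> V"
  shows "\<exists>xs. is_walk E V xs \<and> hd xs = x \<and> last xs = v \<and> length xs \<le> Suc (f v)"
  using assms(3)
proof (induction "f v" arbitrary: v rule: less_induct)
  case less
  show ?case
  proof (cases "v = x")
    case True
    then show ?thesis using assms(1) by (intro exI[of _ "[x]"]) (auto simp: is_walk_def)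
  next
    case False
    then obtain w where w: "w \<in> V" "E w v" "f w < f v" using assms(2) less.prems by blast
    then obtain xs where xs: "is_walk E V xs" "hd xs = x" "last xs = w" "length xs \<le> Suc (f w)"
      using less.hyps by blast
    have "xs \<noteq> []" using xs(1) unfolding is_walk_def by simp
    then have "is_walk E V (xs @ [v])"
      using xs(1,3) w(2) less.prems unfolding is_walk_def
      by (auto simp: nth_append last_conv_nth less_Suc_eq) (metis diff_Suc_Suc minus_nat.diff_0)
    then show ?thesis using xs \<open>xs \<noteq> []\<close> w(3) by (intro exI[of _ "xs @ [v]"]) auto
  qed
qed

lemma gdist_eqI:
  assumes "x \<in> V" "f x = 0"
    and "\<And>a b. E a b \<Longrightarrow> f b \<le> f a + 1"
    and "\<And>v. v \<in> V \<Longrightarrow> v \<noteq> x \<Longrightarrow> \<exists>w\<in>V. E w v \<and> f w < f v"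
    and "y \<in> V"
  shows "gdist V E x y = f y"
  unfolding gdist_def
proof (rule Least_equality)
  obtain xs where xs: "is_walk E V xs" "hd xs = x" "last xs = y" "length xs \<le> Suc (f y)"
    using walk_along_descent[of x V E f y] assms(1,4,5) by blast
  have lower: "f y \<le> m" if "is_walk E V ys" "hd ys = x" "last ys = y" "length ys = Suc m" for ys m
  proof -
    have "ys \<noteq> []" using that(4) by auto
    then have "last ys = ys ! m" using that(4) by (simp add: last_conv_nth)
    then show ?thesis using walk_potential_le[of E V ys f m] that assms(2,3) by simp
  qed
  show "\<exists>xs. is_walk E V xs \<and> hd xs = x \<and> last xs = y \<and> length xs = Suc (f y)"
  proof (cases xs)
    case (Cons a ys)
    then show ?thesis using xs lower[of xs "length ys"] by (intro exI[of _ xs]) auto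
  qed (use xs in \<open>simp add: is_walk_def\<close>)
  show "\<And>m. \<exists>xs. is_walk E V xs \<and> hd xs = x \<and> last xs = y \<and> length xs = Suc m \<Longrightarrow> f y \<le> m"
    using lower by blast
qed

section \<open>Distances in the infinite graph \<open>GP(\<int>,3)\<close>\<close>

text \<open>For \<open>a \<ge> 0\<close>, \<open>uu_dist a\<close>, \<open>uv_dist a\<close> and \<open>vv_dist a\<close> are the distances from
  \<open>u\<^sub>0\<close> to \<open>u\<^sub>a\<close>, from \<open>u\<^sub>0\<close> to \<open>v\<^sub>a\<close> and from \<open>v\<^sub>0\<close> to \<open>v\<^sub>a\<close> in \<open>GP(\<int>,3)\<close>: a shortest walk
  either stays on the outer rim or uses spokes to travel in steps of 3 along the inner rim.\<close>

definition uu_dist :: "int \<Rightarrow> int" where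
  "uu_dist a = min a (a div 3 + a mod 3 + 2)"

definition uv_dist :: "int \<Rightarrow> int" where
  "uv_dist a = a div 3 + a mod 3 + 1"

definition vv_dist :: "int \<Rightarrow> int" where
  "vv_dist a = (if a mod 3 = 0 then a div 3 else a div 3 + a mod 3 + 2)"

definition gpz_dist :: "bool \<Rightarrow> bool \<Rightarrow> int \<Rightarrow> int" where
  "gpz_dist p q a = (if p \<noteq> q then uv_dist a else if p then vv_dist a else uu_dist a)"

lemma int_cases_mod3:
  fixes a :: int
  obtains m where "a = 3 * m" | m where "a = 3 * m + 1" | m where "a = 3 * m + 2"
proof -
  have "a = 3 * (a div 3) + a mod 3" by simp
  moreover have "a mod 3 = 0 \<or> a mod 3 = 1 \<or> a mod 3 = 2" by presburger
  ultimately show ?thesis using that by (metis add_0_right)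
qed

lemma div_mod_3_simps [simp]:
  "(3 * m + c) div 3 = m + c div 3" "(3 * m + c) mod 3 = c mod 3"
  "(3 * m - c) div 3 = m + (- c) div 3" "(3 * m - c) mod 3 = (- c) mod 3" for m c :: int
  using div_mult_self3[of 3 m "- c"] mod_mult_self3[of m 3 "- c"] by (simp_all add: mult.commute)

lemmas gpz_dist_defs = gpz_dist_def uu_dist_def uv_dist_def vv_dist_def

lemma gpz_dist_step:
  assumes "0 \<le> a" "s = (if q then 3 else 1)"
  shows "\<bar>gpz_dist p q (a + s) - gpz_dist p q a\<bar> \<le> 1"
  using assms by (cases a rule: int_cases_mod3) (auto simp: gpz_dist_defs min_def algebra_simps)

text \<open>A step of length \<open>s\<close> from \<open>-a\<close> to \<open>b\<close>, using the symmetry \<open>a \<mapsto> -a\<close> of \<open>GP(\<int>,3)\<close>.\<close>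

lemma gpz_dist_step_across_0:
  assumes "0 \<le> a" "0 \<le> b" "a + b = s" "s = (if q then 3 else 1)"
  shows "\<bar>gpz_dist p q b - gpz_dist p q a\<bar> \<le> 1"
proof -
  have "a \<in> {0, 1, 2, 3}" using assms by (cases q) auto
  then show ?thesis using assms by (cases q; auto simp: gpz_dist_defs)
qed

lemma gpz_dist_switch: "0 \<le> a \<Longrightarrow> \<bar>gpz_dist p True a - gpz_dist p False a\<bar> \<le> 1"
  by (cases a rule: int_cases_mod3) (auto simp: gpz_dist_defs min_def abs_if)

lemma gpz_dist_descent:
  assumes "0 \<le> a" "0 < a \<or> p \<noteq> q" "s = (if q then 3 else 1)"
  shows "(s \<le> a \<and> gpz_dist p q (a - s) < gpz_dist p q a) \<or> gpz_dist p (\<not> q) a < gpz_dist p q a"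
  using assms by (cases a rule: int_cases_mod3) (auto simp: gpz_dist_defs min_def)

lemma uu_dist_bounds: "0 \<le> a \<Longrightarrow> 3 * uu_dist a \<le> a + 10" "3 \<le> a \<Longrightarrow> a + 6 \<le> 3 * uu_dist a"
  by (cases a rule: int_cases_mod3; auto simp: uu_dist_def min_def)+

lemma uv_dist_bounds: "a + 3 \<le> 3 * uv_dist a" "3 * uv_dist a \<le> a + 7"
  by (cases a rule: int_cases_mod3; auto simp: uv_dist_def)+

lemma vv_dist_bounds: "a \<le> 3 * vv_dist a" "3 * vv_dist a \<le> a + 10"
  by (cases a rule: int_cases_mod3; auto simp: vv_dist_def)+

lemma gpz_dist_upper: "0 \<le> a \<Longrightarrow> 3 * gpz_dist p q a \<le> a + 10"
  using uu_dist_bounds[of a] uv_dist_bounds[of a] vv_dist_bounds[of a] by (auto simp: gpz_dist_def)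

lemma gpz_dist_lower: "3 \<le> a \<Longrightarrow> a \<le> 3 * gpz_dist p q a"
  using uu_dist_bounds[of a] uv_dist_bounds[of a] vv_dist_bounds[of a] by (auto simp: gpz_dist_def)

lemma gpz_dist_nonneg: "0 \<le> a \<Longrightarrow> 0 \<le> gpz_dist p q a"
  by (auto simp: gpz_dist_defs)

lemma gpz_dist_mono_gap: "0 \<le> a \<Longrightarrow> a + 10 \<le> b \<Longrightarrow> gpz_dist p q a \<le> gpz_dist p q b"
  using gpz_dist_upper[of a p q] gpz_dist_lower[of b p q] by linarith

lemma gpz_dist_switch_gap:
  assumes "0 \<le> a" "b = a + 6 \<or> a + 8 \<le> b"
  shows "gpz_dist p q a < gpz_dist p (\<not> q) b"
  using assms(2)
proof
  assume "b = a + 6"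
  then show ?thesis using assms(1)
    by (cases a rule: int_cases_mod3) (auto simp: gpz_dist_defs min_def)
next
  assume "a + 8 \<le> b"
  then show ?thesis using assms(1) uu_dist_bounds[of a] uu_dist_bounds[of b]
      uv_dist_bounds[of a] uv_dist_bounds[of b] vv_dist_bounds[of a] vv_dist_bounds[of b]
    by (auto simp: gpz_dist_def)
qed

lemma gpz_dist_shift: "3 \<le> a \<Longrightarrow> gpz_dist p q (a + 3) = gpz_dist p q a + 1"
  by (cases a rule: int_cases_mod3) (auto simp: gpz_dist_defs min_def algebra_simps)

lemma gpz_dist_mult3: "0 \<le> m \<Longrightarrow> gpz_dist p q (3 * m) \<le> m + 2"
  by (auto simp: gpz_dist_defs)

section \<open>Distances in \<open>GP(n,3)\<close>\<close>

definition gp3_dist :: "nat \<Rightarrow> bool \<Rightarrow> bool \<Rightarrow> int \<Rightarrow> int" where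
  "gp3_dist n p q d = min (gpz_dist p q d) (gpz_dist p q (int n - d))"

definition offset :: "nat \<Rightarrow> nat \<Rightarrow> nat \<Rightarrow> int" where
  "offset n i k = (int k - int i) mod int n"

lemma gp3_dist_nonneg: "0 \<le> d \<Longrightarrow> d \<le> int n \<Longrightarrow> 0 \<le> gp3_dist n p q d"
  by (simp add: gp3_dist_def gpz_dist_nonneg)

lemma gp3_dist_le_gpz_dist:
  "gp3_dist n p q d \<le> gpz_dist p q d" "gp3_dist n p q d \<le> gpz_dist p q (int n - d)"
  by (simp_all add: gp3_dist_def)

lemma gp3_dist_sym: "gp3_dist n p q (int n - d) = gp3_dist n p q d"
  by (simp add: gp3_dist_def min.commute)

lemma gp3_dist_eq_gpz_dist: "0 \<le> d \<Longrightarrow> 2 * d + 10 \<le> int n \<Longrightarrow> gp3_dist n p q d = gpz_dist p q d"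
  using gpz_dist_mono_gap[of d "int n - d" p q] by (simp add: gp3_dist_def)

lemma gp3_dist_step:
  assumes "16 \<le> n" "0 \<le> d" "d < int n" "s = (if q then 3 else 1)"
  shows "\<bar>gp3_dist n p q ((d + s) mod int n) - gp3_dist n p q d\<bar> \<le> 1"
proof (cases "d + s < int n")
  case True
  then have "(d + s) mod int n = d + s" using assms by simp
  moreover have "\<bar>gpz_dist p q (d + s) - gpz_dist p q d\<bar> \<le> 1"
    using gpz_dist_step assms by blast
  moreover have "\<bar>gpz_dist p q (int n - d) - gpz_dist p q (int n - (d + s))\<bar> \<le> 1"
    using gpz_dist_step[of "int n - (d + s)" s q p] assms True by (simp add: algebra_simps)
  ultimately show ?thesis unfolding gp3_dist_def by (simp add: min_def abs_le_iff)
next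
  case False
  define e where "e = d + s - int n"
  have e: "0 \<le> e" "e + (int n - d) = s" "s \<le> 3" using False assms e_def by auto
  have "(d + s) mod int n = (e + int n) mod int n" unfolding e_def by simp
  also have "\<dots> = e" using e assms by simp
  finally have "(d + s) mod int n = e" .
  moreover have "gp3_dist n p q e = gpz_dist p q e"
    using gpz_dist_mono_gap[of e "int n - e" p q] e assms unfolding gp3_dist_def by simp
  moreover have "gp3_dist n p q d = gpz_dist p q (int n - d)"
    using gpz_dist_mono_gap[of "int n - d" d p q] e assms unfolding gp3_dist_def by simp
  ultimately show ?thesis
    using gpz_dist_step_across_0[of "int n - d" e s q p] e assms by simp
qed

lemma gp3_dist_switch:
  "0 \<le> d \<Longrightarrow> d \<le> int n \<Longrightarrow> \<bar>gp3_dist n p True d - gp3_dist n p False d\<bar> \<le> 1"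
  using gpz_dist_switch[of d p] gpz_dist_switch[of "int n - d" p]
  unfolding gp3_dist_def by (simp add: min_def abs_le_iff)

lemma neg_mod_eq_if: "0 < n \<Longrightarrow> (- x) mod int n = (if x mod int n = 0 then 0 else int n - x mod int n)"
  by (simp add: zmod_zminus1_eq_if)

lemma gp3_dist_mod_le:
  assumes "0 < n" "0 \<le> e" "e < int n" "(x - e) mod int n = 0 \<or> (x + e) mod int n = 0"
  shows "gp3_dist n p q (x mod int n) \<le> gpz_dist p q e"
proof -
  have "x mod int n = e mod int n \<or> x mod int n = (- e) mod int n"
    using assms(4) by (auto simp: mod_eq_dvd_iff mod_eq_0_iff_dvd)
  then have "x mod int n = e \<or> x mod int n = int n - e"
    using assms(1-3) by (auto simp: neg_mod_eq_if)
  then show ?thesis using gp3_dist_le_gpz_dist[of n p q "x mod int n"] by auto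
qed

lemma gp3_dist_descent:
  assumes "0 \<le> d" "d < int n" "s = (if q then 3 else 1)" "d = 0 \<longrightarrow> p \<noteq> q"
  shows "gp3_dist n p q ((d + s) mod int n) < gp3_dist n p q d
    \<or> gp3_dist n p q ((d - s) mod int n) < gp3_dist n p q d
    \<or> gp3_dist n p (\<not> q) d < gp3_dist n p q d"
proof -
  obtain a where a: "a = d \<or> a = int n - d" "gp3_dist n p q d = gpz_dist p q a"
    unfolding gp3_dist_def by (metis min_def)
  have "0 \<le> a" "0 < a \<or> p \<noteq> q" using a assms by auto
  with gpz_dist_descent[of a p q s] assms(3)
  consider "gpz_dist p (\<not> q) a < gpz_dist p q a" | "s \<le> a" "gpz_dist p q (a - s) < gpz_dist p q a"
    by blast
  then show ?thesis
  proof cases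
    case 1
    then show ?thesis using a gp3_dist_le_gpz_dist[of n p "\<not> q" d] by auto
  next
    case 2
    have "gp3_dist n p q ((d - s) mod int n) \<le> gpz_dist p q (a - s)" if "a = d"
      using gp3_dist_mod_le[of n "a - s" "d - s" p q] that 2 assms by simp
    moreover have "gp3_dist n p q ((d + s) mod int n) \<le> gpz_dist p q (a - s)" if "a = int n - d"
      using gp3_dist_mod_le[of n "a - s" "d + s" p q] that 2 assms by simp
    ultimately show ?thesis using 2 a by fastforce
  qed
qed

lemma offset_range: "0 < n \<Longrightarrow> 0 \<le> offset n i k \<and> offset n i k < int n"
  by (simp add: offset_def)

lemma offset_add: "0 < n \<Longrightarrow> offset n i ((k + s) mod n) = (offset n i k + int s) mod int n"
  unfolding offset_def by (simp add: of_nat_mod mod_simps algebra_simps)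

lemma offset_diff:
  assumes "0 < n" "s \<le> n"
  shows "offset n i ((k + n - s) mod n) = (offset n i k - int s) mod int n"
proof -
  have "offset n i ((k + n - s) mod n) = (int k - int i - int s + int n) mod int n"
    unfolding offset_def using assms by (simp add: of_nat_mod mod_simps algebra_simps of_nat_diff)
  then show ?thesis unfolding offset_def by (simp add: mod_simps)
qed

lemma offset_eq_0_iff:
  assumes "i < n" "k < n"
  shows "offset n i k = 0 \<longleftrightarrow> i = k"
proof
  assume "offset n i k = 0"
  then have "int n dvd int k - int i" unfolding offset_def by (simp add: mod_eq_0_iff_dvd)
  moreover have "\<bar>int k - int i\<bar> < int n" using assms by auto
  ultimately show "i = k" using dvd_imp_le_int[of "int k - int i" "int n"] by fastforce
qed (simp add: offset_def)

lemma offset_to_0: "t < n \<Longrightarrow> offset n t 0 = (if t = 0 then 0 else int n - int t)"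
  unfolding offset_def by (auto simp: neg_mod_eq_if)

lemma offset_eq:
  assumes "j < n" "t < n"
  shows "offset n t j = (if t \<le> j then int j - int t else int n + int j - int t)"
proof (cases "t \<le> j")
  case False
  have "(int j - int t) mod int n = (int n + int j - int t) mod int n"
    by (metis add.commute add_diff_eq mod_add_self2)
  then show ?thesis using assms False unfolding offset_def by simp
qed (use assms in \<open>simp add: offset_def\<close>)

lemma gp3_dist_edge:
  assumes "16 \<le> n" "gp_adj n 3 a b"
  shows "\<bar>gp3_dist n p (fst b) (offset n i (snd b)) - gp3_dist n p (fst a) (offset n i (snd a))\<bar> \<le> 1"
proof -
  have n: "0 < n" using assms by simp
  have edge: "\<bar>gp3_dist n p (fst b) (offset n i (snd b)) - gp3_dist n p (fst a) (offset n i (snd a))\<bar> \<le> 1"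
    if "gp_edge1 n 3 a b" for a b
  proof -
    obtain q k where a: "a = (q, k)" by (cases a)
    from that consider "b = (q, (k + (if q then 3 else 1)) mod n)" | "q = False" "b = (True, k)"
      unfolding gp_edge1_def a by auto
    then show ?thesis
    proof cases
      case 1
      then show ?thesis
        using gp3_dist_step[OF assms(1), of "offset n i k" "if q then 3 else 1" q p]
          offset_add[OF n, of i k "if q then 3 else 1"] offset_range[OF n, of i k] a
        by (cases q) simp_all
    next
      case 2
      then show ?thesis using gp3_dist_switch[of "offset n i k" n p] offset_range[OF n, of i k] a by simp
    qed
  qed
  from assms(2) show ?thesis
    unfolding gp_adj_def using edge[of a b] edge[of b a] by (auto simp: abs_minus_commute)
qed

lemma gp3_dist_neighbour_closer:
  assumes "16 \<le> n" "(p, i) \<in> gp_verts n" "(q, k) \<in> gp_verts n" "(q, k) \<noteq> (p, i)"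
  shows "\<exists>w\<in>gp_verts n. gp_adj n 3 w (q, k) \<and>
    gp3_dist n p (fst w) (offset n i (snd w)) < gp3_dist n p q (offset n i k)"
proof -
  define s where "s = (if q then 3 else 1 :: nat)"
  define d where "d = offset n i k"
  have n: "0 < n" "s \<le> n" and ik: "i < n" "k < n" using assms unfolding s_def gp_verts_def by auto
  have d: "0 \<le> d" "d < int n" using offset_range[OF n(1)] d_def by auto
  have "d = 0 \<longrightarrow> p \<noteq> q" using assms(4) offset_eq_0_iff[OF ik] d_def by auto
  then have descent: "gp3_dist n p q ((d + int s) mod int n) < gp3_dist n p q d
    \<or> gp3_dist n p q ((d - int s) mod int n) < gp3_dist n p q d \<or> gp3_dist n p (\<not> q) d < gp3_dist n p q d"
    using gp3_dist_descent[OF d, of "int s" q p] s_def by auto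
  have "((k + n - s) mod n + s) mod n = k" using ik n by (simp add: mod_add_left_eq)
  then have "gp_edge1 n 3 (q, k) (q, (k + s) mod n)" "gp_edge1 n 3 (q, (k + n - s) mod n) (q, k)"
    "gp_edge1 n 3 (q, k) (\<not> q, k) \<or> gp_edge1 n 3 (\<not> q, k) (q, k)"
    by (auto simp: gp_edge1_def s_def)
  then have "gp_adj n 3 (q, (k + s) mod n) (q, k)" "gp_adj n 3 (q, (k + n - s) mod n) (q, k)"
    "gp_adj n 3 (\<not> q, k) (q, k)"
    using assms(3) n by (auto simp: gp_adj_def gp_verts_def)
  moreover have "(q, (k + s) mod n) \<in> gp_verts n" "(q, (k + n - s) mod n) \<in> gp_verts n"
    "(\<not> q, k) \<in> gp_verts n"
    using n ik by (auto simp: gp_verts_def)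
  ultimately show ?thesis
    using descent offset_add[OF n(1), of i k s] offset_diff[OF n, of i k] unfolding d_def by fastforce
qed

theorem gdist_gp3:
  assumes "16 \<le> n" "x \<in> gp_verts n" "y \<in> gp_verts n"
  shows "int (gdist (gp_verts n) (gp_adj n 3) x y)
    = gp3_dist n (fst x) (fst y) (offset n (snd x) (snd y))"
proof -
  define f where "f w = nat (gp3_dist n (fst x) (fst w) (offset n (snd x) (snd w)))" for w
  have f: "int (f w) = gp3_dist n (fst x) (fst w) (offset n (snd x) (snd w))" for w
    using gp3_dist_nonneg offset_range[of n "snd x" "snd w"] assms(1) unfolding f_def
    by (simp add: less_imp_le)
  have "gdist (gp_verts n) (gp_adj n 3) x y = f y"
  proof (rule gdist_eqI)
    show "f x = 0"
      unfolding f_def offset_def gp3_dist_def by (simp add: gpz_dist_defs)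
    show "f b \<le> f a + 1" if "gp_adj n 3 a b" for a b
      using gp3_dist_edge[OF assms(1) that, of "fst x" "snd x"] f[of a] f[of b] by linarith
    show "\<exists>w\<in>gp_verts n. gp_adj n 3 w v \<and> f w < f v" if v: "v \<in> gp_verts n" "v \<noteq> x" for v
    proof -
      obtain w where "w \<in> gp_verts n" "gp_adj n 3 w v"
        "gp3_dist n (fst x) (fst w) (offset n (snd x) (snd w))
          < gp3_dist n (fst x) (fst v) (offset n (snd x) (snd v))"
        using gp3_dist_neighbour_closer[OF assms(1), of "fst x" "snd x" "fst v" "snd v"] v assms(2)
        by auto
      then show ?thesis using f[of w] f[of v] by (intro bexI[of _ w]) auto
    qed
  qed (use assms in auto)
  then show ?thesis using f by simp
qed

definition gp3_diam_bound :: "nat \<Rightarrow> int" where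
  "gp3_diam_bound n = int (n div 6) + (if n mod 6 = 4 then 4 else 3)"

lemma gp3_dist_le_diam_bound:
  assumes "0 \<le> d" "d \<le> int n"
  shows "gp3_dist n p q d \<le> gp3_diam_bound n"
proof -
  define K r where "K = int (n div 6)" and "r = int (n mod 6)"
  have n: "int n = 6 * K + r" "0 \<le> r" "r < 6" unfolding K_def r_def by (simp_all add: zdiv_int zmod_int)
  obtain a where a: "a = d \<or> a = int n - d" "0 \<le> a" "2 * a \<le> int n"
  proof (cases "2 * d \<le> int n")
    case True
    then show ?thesis using that[of d] assms by auto
  next
    case False
    then show ?thesis using that[of "int n - d"] assms by auto
  qed
  have le_a: "3 * gp3_dist n p q d \<le> a + 10"
    using a gp3_dist_le_gpz_dist[of n p q d] gpz_dist_upper[of a p q] by auto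
  have bound: "gp3_diam_bound n = K + (if r = 4 then 4 else 3)"
    unfolding gp3_diam_bound_def K_def r_def by simp
  show ?thesis
  proof (cases "r = 5 \<and> int n \<le> 2 * a + 1")
    case True
    then have "int n - a = 3 * (K + 1)" using n a(3) by simp
    then have "gp3_dist n p q d \<le> gpz_dist p q (3 * (K + 1))"
      using a(1) gp3_dist_le_gpz_dist[of n p q d] by auto
    also have "\<dots> \<le> K + 3" using gpz_dist_mult3[of "K + 1" p q] n by simp
    finally show ?thesis using True bound by simp
  next
    case False
    have "a \<le> 3 * K + 1 \<or> r = 4 \<and> a \<le> 3 * K + 2" using False a(3) n by presburger
    then show ?thesis using le_a unfolding bound by presburger
  qed
qed

lemma gdiam_gp3_le:
  assumes "16 \<le> n"
  shows "int (gdiam (gp_verts n) (gp_adj n 3)) \<le> gp3_diam_bound n"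
proof -
  let ?V = "gp_verts n" and ?E = "gp_adj n 3"
  have "finite {gdist ?V ?E x y |x y. x \<in> ?V \<and> y \<in> ?V}"
    by (rule finite_image_set2) (simp_all add: gp_verts_def)
  moreover have "(False, 0) \<in> ?V" using assms by (simp add: gp_verts_def)
  then have "{gdist ?V ?E x y |x y. x \<in> ?V \<and> y \<in> ?V} \<noteq> {}" by blast
  ultimately have "gdiam ?V ?E \<in> {gdist ?V ?E x y |x y. x \<in> ?V \<and> y \<in> ?V}"
    unfolding gdiam_def by (rule Max_in)
  then obtain x y where xy: "x \<in> ?V" "y \<in> ?V" "gdiam ?V ?E = gdist ?V ?E x y" by blast
  have "0 \<le> offset n (snd x) (snd y)" "offset n (snd x) (snd y) \<le> int n"
    using offset_range[of n "snd x" "snd y"] assms by auto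
  then show ?thesis
    using xy gdist_gp3[OF assms xy(1,2)] gp3_dist_le_diam_bound by simp
qed

section \<open>\<open>|W\<^sub>x\<^sub>y| - |W\<^sub>y\<^sub>x|\<close> as a sum of signs\<close>

lemma sum_sgn_diff_eq_card_diff:
  fixes a c :: "'a \<Rightarrow> int"
  assumes "finite V"
  shows "(\<Sum>w\<in>V. sgn (c w - a w)) = int (card {w\<in>V. a w < c w}) - int (card {w\<in>V. c w < a w})"
proof -
  have "(\<Sum>w\<in>V. sgn (c w - a w)) = (\<Sum>w\<in>V. of_bool (a w < c w) - of_bool (c w < a w))"
    by (rule sum.cong) (auto simp: sgn_if)
  also have "\<dots> = int (card {w\<in>V. a w < c w}) - int (card {w\<in>V. c w < a w})"
    using assms by (simp add: sum_subtractf sum_of_bool_eq Int_def conj_commute)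
  finally show ?thesis .
qed

definition cycle_dist :: "nat \<Rightarrow> int \<Rightarrow> int" where
  "cycle_dist n d = min d (int n - d)"

definition vertex_sign :: "nat \<Rightarrow> nat \<Rightarrow> bool \<Rightarrow> nat \<Rightarrow> int" where
  "vertex_sign n j p t = sgn (gp3_dist n p True (offset n t j) - gp3_dist n p False (offset n t 0))"

definition cycle_sign :: "nat \<Rightarrow> nat \<Rightarrow> nat \<Rightarrow> int" where
  "cycle_sign n j t = sgn (cycle_dist n (offset n t j) - cycle_dist n (offset n t 0))"

definition defect :: "nat \<Rightarrow> nat \<Rightarrow> nat \<Rightarrow> int" where
  "defect n j t = vertex_sign n j False t + vertex_sign n j True t - 2 * cycle_sign n j t"

lemma gp3_dist_neg_mod: "0 < n \<Longrightarrow> gp3_dist n p q ((- x) mod int n) = gp3_dist n p q (x mod int n)"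
  by (simp add: neg_mod_eq_if gp3_dist_def min.commute)

lemma cycle_dist_neg_mod: "0 < n \<Longrightarrow> cycle_dist n ((- x) mod int n) = cycle_dist n (x mod int n)"
  by (simp add: neg_mod_eq_if cycle_dist_def min.commute)

text \<open>The involution \<open>t \<mapsto> j - t\<close> of the cycle swaps the distances to \<open>0\<close> and \<open>j\<close>.\<close>

lemma cycle_sign_sum:
  assumes "0 < n"
  shows "(\<Sum>t<n. cycle_sign n j t) = 0"
proof -
  define r where "r t = nat (offset n t j)" for t
  have r: "int (r t) = (int j - int t) mod int n" for t
    using assms unfolding r_def offset_def by simp
  have rr: "r (r t) = t" if "t < n" for t
    using that assms r[of "r t"] r[of t] by (simp add: mod_diff_right_eq)
  have "cycle_sign n j (r t) = - cycle_sign n j t" for t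
  proof -
    have "offset n (r t) j = int t mod int n" "offset n (r t) 0 = (- (int j - int t)) mod int n"
      unfolding offset_def r by (simp_all add: mod_diff_right_eq mod_minus_eq)
    then show ?thesis
      unfolding cycle_sign_def using cycle_dist_neg_mod[OF assms, of "int t"]
        cycle_dist_neg_mod[OF assms, of "int j - int t"]
      by (simp add: offset_def sgn_minus[symmetric])
  qed
  moreover have "(\<Sum>t<n. cycle_sign n j t) = (\<Sum>t<n. cycle_sign n j (r t))"
    by (rule sum.reindex_bij_witness[of _ r r])
      (use rr assms in \<open>auto simp: r_def offset_def nat_less_iff\<close>)
  ultimately show ?thesis by (simp add: sum_negf)
qed

lemma card_Wset_diff_eq_defect_sum:
  assumes "16 \<le> n" "j < n"
  shows "int (card (Wset (gp_verts n) (gp_adj n 3) (False, 0) (True, j)))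
       - int (card (Wset (gp_verts n) (gp_adj n 3) (True, j) (False, 0))) = (\<Sum>t<n. defect n j t)"
proof -
  let ?V = "gp_verts n" and ?E = "gp_adj n 3"
  define c a where "c w = int (gdist ?V ?E w (True, j))" and "a w = int (gdist ?V ?E w (False, 0))" for w
  have ca: "c w = gp3_dist n (fst w) True (offset n (snd w) j)"
    "a w = gp3_dist n (fst w) False (offset n (snd w) 0)" if "w \<in> ?V" for w
    using gdist_gp3[OF assms(1) that] assms unfolding c_def a_def by (auto simp: gp_verts_def)
  have "int (card (Wset ?V ?E (False, 0) (True, j))) - int (card (Wset ?V ?E (True, j) (False, 0)))
      = (\<Sum>w\<in>?V. sgn (c w - a w))"
    using sum_sgn_diff_eq_card_diff[of ?V c a] unfolding Wset_def c_def a_def by (simp add: gp_verts_def)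
  also have "\<dots> = (\<Sum>w\<in>?V. vertex_sign n j (fst w) (snd w))"
    by (rule sum.cong) (simp_all add: ca vertex_sign_def)
  also have "\<dots> = (\<Sum>p\<in>UNIV. \<Sum>t<n. vertex_sign n j p t)"
    unfolding gp_verts_def by (simp add: sum.cartesian_product case_prod_beta lessThan_atLeast0)
  also have "\<dots> = (\<Sum>t<n. vertex_sign n j False t + vertex_sign n j True t)"
    by (simp add: UNIV_bool sum.distrib)
  also have "\<dots> = (\<Sum>t<n. defect n j t) + 2 * (\<Sum>t<n. cycle_sign n j t)"
    by (simp add: defect_def sum.distrib sum_subtractf sum_distrib_left)
  finally show ?thesis using cycle_sign_sum assms by simp
qed

section \<open>Localisation to two windows\<close>

lemma gp3_dist_lt_switch:
  assumes "0 \<le> e" "e = d \<or> e = int n - d"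
    and "d' = e + 6 \<or> e + 8 \<le> d'" "int n - d' = e + 6 \<or> e + 8 \<le> int n - d'"
  shows "gp3_dist n p q d < gp3_dist n p (\<not> q) d'"
proof -
  have "gp3_dist n p q d \<le> gpz_dist p q e" using assms(2) gp3_dist_le_gpz_dist[of n p q d] by auto
  also have "\<dots> < gp3_dist n p (\<not> q) d'"
    using gpz_dist_switch_gap[OF assms(1) assms(3)] gpz_dist_switch_gap[OF assms(1) assms(4)]
    unfolding gp3_dist_def by simp
  finally show ?thesis .
qed

lemma cycle_dist_lt:
  "e = d \<or> e = int n - d \<Longrightarrow> e < d' \<Longrightarrow> e < int n - d' \<Longrightarrow> cycle_dist n d < cycle_dist n d'"
  unfolding cycle_dist_def by auto

lemma defect_eq_0_outside_windows:
  assumes "16 \<le> n" "2 * j \<le> n" "j = 6 \<or> 8 \<le> j" "t < n"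
    and "8 \<le> \<bar>2 * int t - int j\<bar>" "8 \<le> \<bar>2 * int t - int j - int n\<bar>"
  shows "defect n j t = 0"
proof -
  define d0 dj where "d0 = offset n t 0" and "dj = offset n t j"
  have d0: "d0 = (if t = 0 then 0 else int n - int t)" using offset_to_0 assms(4) d0_def by simp
  have dj: "dj = (if t \<le> j then int j - int t else int n + int j - int t)"
    using offset_eq assms(2,4) dj_def by simp
  have "vertex_sign n j p t = cycle_sign n j t" for p
  proof -
    consider "2 * int t + 8 \<le> int j" | "int n + int j + 8 \<le> 2 * int t"
      | "int j + 8 \<le> 2 * int t" "2 * int t + 8 \<le> int n + int j"
      using assms(5,6) by (simp add: abs_if split: if_splits)
    then show ?thesis
    proof cases
      case 1
      then have "gp3_dist n p False d0 < gp3_dist n p True dj \<and> cycle_dist n d0 < cycle_dist n dj"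
        using gp3_dist_lt_switch[of "int t" d0 n dj p False] cycle_dist_lt[of "int t" d0 n dj]
          d0 dj assms(1,2) by auto
      then show ?thesis unfolding vertex_sign_def cycle_sign_def d0_def dj_def by simp
    next
      case 2
      then have "gp3_dist n p False d0 < gp3_dist n p True dj \<and> cycle_dist n d0 < cycle_dist n dj"
        using gp3_dist_lt_switch[of "int n - int t" d0 n dj p False]
          cycle_dist_lt[of "int n - int t" d0 n dj] d0 dj assms(3,4) by auto
      then show ?thesis unfolding vertex_sign_def cycle_sign_def d0_def dj_def by simp
    next
      case 3
      define e where "e = \<bar>int j - int t\<bar>"
      have "gp3_dist n p True dj < gp3_dist n p False d0 \<and> cycle_dist n dj < cycle_dist n d0"
        using gp3_dist_lt_switch[of e dj n d0 p True] cycle_dist_lt[of e dj n d0]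
          3 d0 dj assms(1,2,3,4) unfolding e_def by (auto split: if_splits)
      then show ?thesis unfolding vertex_sign_def cycle_sign_def d0_def dj_def by (simp add: sgn_if)
    qed
  qed
  then show ?thesis unfolding defect_def by simp
qed

lemma defect_reflect:
  assumes "0 < t" "t < n" "j \<le> n"
  shows "defect n (n - j) (n - t) = defect n j t"
proof -
  have n: "0 < n" using assms by simp
  have "offset n (n - t) (n - j) = (- (int j - int t)) mod int n"
    "offset n (n - t) 0 = (- (- int t)) mod int n"
    "offset n t j = (int j - int t) mod int n" "offset n t 0 = (- int t) mod int n"
    using assms unfolding offset_def by (simp_all add: of_nat_diff mod_simps)
  then show ?thesis
    unfolding defect_def vertex_sign_def cycle_sign_def
    by (simp only: gp3_dist_neg_mod[OF n] cycle_dist_neg_mod[OF n])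
qed

definition window :: "nat \<Rightarrow> nat set" where
  "window J = {t. \<bar>2 * int t - int J\<bar> < 8}"

definition window_sum :: "nat \<Rightarrow> nat \<Rightarrow> int" where
  "window_sum n J = (\<Sum>t\<in>window J. defect n J t)"

lemma window_eq_interval: "window J = {(J - 6) div 2 .. (J + 7) div 2}"
  unfolding window_def by (auto simp: abs_less_iff)

lemma defect_sum_eq_window_sums:
  assumes "17 \<le> n" "2 * j \<le> n" "j = 6 \<or> 8 \<le> j"
  shows "(\<Sum>t<n. defect n j t) = window_sum n j + window_sum n (n - j)"
proof -
  define F where "F = (\<lambda>s. n - s) ` window (n - j)"
  have fin: "finite (window J)" for J by (simp add: window_eq_interval)
  have F_iff: "t \<in> F \<longleftrightarrow> t < n \<and> \<bar>2 * int t - int j - int n\<bar> < 8" for t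
  proof
    assume "t \<in> F"
    then obtain s where "s \<in> window (n - j)" "t = n - s" unfolding F_def by blast
    then show "t < n \<and> \<bar>2 * int t - int j - int n\<bar> < 8" using assms by (auto simp: window_def)
  next
    assume "t < n \<and> \<bar>2 * int t - int j - int n\<bar> < 8"
    then have "n - t \<in> window (n - j)" "t = n - (n - t)" using assms by (auto simp: window_def)
    then show "t \<in> F" unfolding F_def by blast
  qed
  have N: "window j \<subseteq> {..<n}" "window j \<inter> F = {}"
    using assms by (auto simp: window_def F_iff)
  have "(\<Sum>t<n. defect n j t) = (\<Sum>t\<in>window j \<union> F. defect n j t)"
    by (rule sum.mono_neutral_right)
      (use N F_iff assms in \<open>auto intro!: defect_eq_0_outside_windows simp: window_def not_less\<close>)
  also have "\<dots> = window_sum n j + (\<Sum>t\<in>F. defect n j t)"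
    unfolding window_sum_def using N fin F_def by (simp add: sum.union_disjoint)
  also have "(\<Sum>t\<in>F. defect n j t) = (\<Sum>s\<in>window (n - j). defect n j (n - s))"
    unfolding F_def by (subst sum.reindex) (use assms in \<open>auto simp: inj_on_def window_def of_nat_diff\<close>)
  also have "\<dots> = window_sum n (n - j)"
    unfolding window_sum_def
    by (rule sum.cong) (use assms defect_reflect[of "n - s" n j for s] in \<open>auto simp: window_def\<close>)
  finally show ?thesis .
qed

section \<open>Evaluation of the window sums\<close>

text \<open>For \<open>n \<ge> J + 17\<close> the short way round the cycle always wins near the window,
  so the defect there is that of \<open>GP(\<int>,3)\<close>.\<close>

lemma defect_eq_gpz_dist:
  assumes "6 \<le> J" "J + 17 \<le> n" "t \<in> window J"
  shows "defect n J t =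
      sgn (gpz_dist False True (int J - int t) - gpz_dist False False (int t))
    + sgn (gpz_dist True True (int J - int t) - gpz_dist True False (int t))
    - 2 * sgn (int J - 2 * int t)"
proof -
  have t: "t \<le> J" "int J \<le> 2 * int t + 7" "2 * int t \<le> int J + 7"
    using assms by (auto simp: window_def)
  have dj: "offset n t J = int J - int t" using offset_eq[of J n t] t assms by simp
  have d0: "offset n t 0 = int t \<or> offset n t 0 = int n - int t" using offset_to_0[of t n] t assms by auto
  have "gp3_dist n p True (offset n t J) = gpz_dist p True (int J - int t)" for p
    unfolding dj using t assms by (intro gp3_dist_eq_gpz_dist) auto
  moreover have "gp3_dist n p False (offset n t 0) = gpz_dist p False (int t)" for p
    using d0 gp3_dist_sym[of n p False "int t"] gp3_dist_eq_gpz_dist[of "int t" n p False] t assms by auto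
  moreover have "cycle_dist n (offset n t J) = int J - int t" "cycle_dist n (offset n t 0) = int t"
    using dj d0 t assms by (auto simp: cycle_dist_def)
  ultimately show ?thesis by (simp add: defect_def vertex_sign_def cycle_sign_def)
qed

lemma window_sum_stable: "6 \<le> J \<Longrightarrow> J + 17 \<le> n \<Longrightarrow> window_sum n J = window_sum (J + 17) J"
  unfolding window_sum_def by (rule sum.cong) (simp_all add: defect_eq_gpz_dist)

lemma gp3_dist_shift:
  "3 \<le> d \<Longrightarrow> d + 3 \<le> int n \<Longrightarrow> gp3_dist (n + 6) p q (d + 3) = gp3_dist n p q d + 1"
  using gpz_dist_shift[of d p q] gpz_dist_shift[of "int n - d" p q]
  by (simp add: gp3_dist_def algebra_simps)

lemma defect_shift:
  assumes "12 \<le> J" "J < n" "t \<in> window J"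
  shows "defect (n + 6) (J + 6) (t + 3) = defect n J t"
proof -
  have t: "3 \<le> t" "t + 3 \<le> J" using assms by (auto simp: window_def)
  have "offset (n + 6) (t + 3) (J + 6) = (int J - int t) + 3" "offset n t J = int J - int t"
    "offset (n + 6) (t + 3) 0 = (int n - int t) + 3" "offset n t 0 = int n - int t"
    using offset_eq offset_to_0 t assms by simp_all
  moreover have "gp3_dist (n + 6) p q ((int J - int t) + 3) = gp3_dist n p q (int J - int t) + 1"
    "gp3_dist (n + 6) p q ((int n - int t) + 3) = gp3_dist n p q (int n - int t) + 1" for p q
    using t assms by (simp_all add: gp3_dist_shift)
  moreover have "cycle_dist (n + 6) (d + 3) = cycle_dist n d + 3" for d
    by (simp add: cycle_dist_def)
  ultimately show ?thesis by (simp add: defect_def vertex_sign_def cycle_sign_def)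
qed

lemma window_sum_shift:
  assumes "12 \<le> J" "J < n"
  shows "window_sum (n + 6) (J + 6) = window_sum n J"
proof -
  have "window (J + 6) = (\<lambda>t. t + 3) ` window J"
  proof (intro set_eqI iffI)
    fix t assume "t \<in> window (J + 6)"
    then have "t - 3 \<in> window J" "t = t - 3 + 3" using assms by (auto simp: window_def)
    then show "t \<in> (\<lambda>t. t + 3) ` window J" by blast
  qed (auto simp: window_def)
  then show ?thesis
    unfolding window_sum_def by (simp add: sum.reindex defect_shift assms)
qed

lemma window_sum_code [code]:
  "window_sum n J = (\<Sum>t\<leftarrow>[(J - 6) div 2..<(J + 7) div 2 + 1]. defect n J t)"
  unfolding window_sum_def window_eq_interval
  by (simp add: atLeastLessThanSuc_atLeastAtMost[symmetric] sum_set_upt_conv_sum_list_nat[symmetric]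
      del: upt_Suc)

lemma window_sum_table_far:
  "\<forall>G\<in>set [6, 8, 9, 11, 14]. \<forall>J\<in>set [9..<18].
     (G \<le> J \<or> 12 \<le> J) \<and> 17 \<le> J + G \<longrightarrow> window_sum (J + G) J < 0"
  by code_simp

lemma window_sum_table_near:
  "\<forall>J\<in>set [6, 8, 9, 11, 14]. \<forall>G\<in>set [J..<17]. 17 \<le> J + G \<longrightarrow> window_sum (J + G) J \<le> 0"
  by code_simp

lemma window_sum_table_stable:
  "\<forall>J\<in>set [6, 8, 9, 11]. window_sum (J + 17) J \<le> 0"
  "\<forall>J\<in>set [12..<18]. window_sum (J + 17) J < 0"
  by code_simp+

text \<open>The offsets \<open>j\<close> used for the pairs \<open>u\<^sub>0, v\<^sub>j\<close>: \<open>3 l - 7\<close> lies at distance \<open>l \<ge> 5\<close>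
  from \<open>u\<^sub>0\<close>, and \<open>6\<close>, \<open>9\<close> (or \<open>8\<close> when \<open>n = 17\<close>) at distance \<open>3\<close>, \<open>4\<close>.\<close>

definition good_offset :: "nat \<Rightarrow> bool" where
  "good_offset j \<longleftrightarrow> j \<in> {6, 8, 9, 11, 14} \<or> 17 \<le> j"

lemma window_sum_far_neg:
  assumes "good_offset G" "G \<le> J \<or> 12 \<le> J" "17 \<le> J + G"
  shows "window_sum (J + G) J < 0"
  using assms(2,3)
proof (induction J rule: less_induct)
  case (less J)
  have "6 \<le> G" using assms(1) by (auto simp: good_offset_def)
  show ?case
  proof (cases "18 \<le> J")
    case True
    then have "window_sum (J + G) J = window_sum (J - 6 + G) (J - 6)"
      using window_sum_shift[of "J - 6" "J - 6 + G"] \<open>6 \<le> G\<close> by simp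
    also have "\<dots> < 0"
      by (rule less.IH) (use True \<open>6 \<le> G\<close> in auto)
    finally show ?thesis .
  next
    case False
    show ?thesis
    proof (cases "17 \<le> G")
      case True
      then have "window_sum (J + G) J = window_sum (J + 17) J"
        using less.prems by (intro window_sum_stable) auto
      also have "\<dots> < 0"
      proof -
        have "J \<in> set [12..<18]" using less.prems True \<open>\<not> 18 \<le> J\<close> by auto
        then show ?thesis using window_sum_table_stable(2) by blast
      qed
      finally show ?thesis .
    next
      case False
      then have "G \<in> set [6, 8, 9, 11, 14]" "J \<in> set [9..<18]"
        using assms(1) less.prems False \<open>\<not> 18 \<le> J\<close> by (auto simp: good_offset_def)
      then show ?thesis using window_sum_table_far less.prems by blast
    qed
  qed
qed

lemma window_sum_near_nonpos:
  assumes "good_offset J" "J \<le> G" "17 \<le> J + G"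
  shows "window_sum (J + G) J \<le> 0"
proof (cases "17 \<le> G")
  case True
  then have "window_sum (J + G) J = window_sum (J + 17) J"
    using assms by (intro window_sum_stable) (auto simp: good_offset_def)
  also have "\<dots> \<le> 0"
  proof (cases "12 \<le> J")
    case True
    then show ?thesis using window_sum_far_neg[of 17 J] by (simp add: good_offset_def)
  next
    case False
    then have "J \<in> set [6, 8, 9, 11]" using assms(1) by (auto simp: good_offset_def)
    then show ?thesis using window_sum_table_stable(1) by blast
  qed
  finally show ?thesis .
next
  case False
  then have "J \<in> set [6, 8, 9, 11, 14]" "G \<in> set [J..<17]" using assms by (auto simp: good_offset_def)
  then show ?thesis using window_sum_table_near assms(3) by blast
qed

lemma defect_sum_neg:
  assumes "17 \<le> n" "good_offset j" "2 * j \<le> n"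
  shows "(\<Sum>t<n. defect n j t) < 0"
proof -
  have "(\<Sum>t<n. defect n j t) = window_sum (j + (n - j)) j + window_sum ((n - j) + j) (n - j)"
    using defect_sum_eq_window_sums[OF assms(1,3)] assms(2,3) by (auto simp: good_offset_def)
  moreover have "window_sum (j + (n - j)) j \<le> 0"
    using window_sum_near_nonpos[of j "n - j"] assms by simp
  moreover have "window_sum ((n - j) + j) (n - j) < 0"
    using window_sum_far_neg[of j "n - j"] assms by (simp add: le_diff_conv2)
  ultimately show ?thesis by linarith
qed

lemma gp3_dist_uv: "gp3_dist n False True d = min (uv_dist d) (uv_dist (int n - d))"
  by (simp add: gp3_dist_def gpz_dist_def)

lemma good_offset_3l_minus_7:
  assumes "5 \<le> l" "int l < gp3_diam_bound n"
  shows "good_offset (3 * l - 7) \<and> 2 * (3 * l - 7) \<le> n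
    \<and> gp3_dist n False True (int (3 * l - 7)) = int l"
proof -
  define j where "j = 3 * l - 7"
  define K r where "K = n div 6" and "r = n mod 6"
  have n: "n = 6 * K + r" unfolding K_def r_def by simp
  have "l \<le> K + 2 \<or> (r = 4 \<and> l = K + 3)"
    using assms(2) unfolding gp3_diam_bound_def K_def[symmetric] r_def[symmetric]
    by (auto split: if_splits)
  then have j: "2 * j \<le> n" "2 * j + 1 \<noteq> n"
    using assms(1) n unfolding j_def by (elim disjE; linarith)+
  have "l = 5 \<or> l = 6 \<or> l = 7 \<or> 8 \<le> l" using assms(1) by linarith
  then have "good_offset j" unfolding j_def good_offset_def by auto
  moreover have uv_j: "uv_dist (int j) = int l"
    using assms(1) unfolding j_def uv_dist_def by (simp add: of_nat_diff)
  moreover have "int l \<le> uv_dist (int n - int j)"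
  proof (cases "2 * j = n")
    case True
    then have "int n - int j = int j" by linarith
    then show ?thesis using uv_j by simp
  next
    case False
    then have "2 * j + 2 \<le> n" using j by linarith
    then have "3 * int l \<le> 3 * uv_dist (int n - int j) + 2"
      using uv_dist_bounds(1)[of "int n - int j"] assms(1) unfolding j_def by linarith
    then show ?thesis by linarith
  qed
  ultimately show ?thesis using j(1) unfolding j_def[symmetric] by (simp add: gp3_dist_uv)
qed

lemma good_offset_exists:
  assumes "17 \<le> n" "3 \<le> l" "int l < gp3_diam_bound n"
  shows "\<exists>j. good_offset j \<and> 2 * j \<le> n \<and> gp3_dist n False True (int j) = int l"
proof -
  consider "l = 3" | "l = 4" "n = 17" | "l = 4" "18 \<le> n" | "5 \<le> l" using assms(1,2) by linarith
  then show ?thesis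
  proof cases
    case 1
    then show ?thesis using uv_dist_bounds(1)[of "int n - 6"] assms(1)
      by (intro exI[of _ 6]) (simp add: good_offset_def gp3_dist_uv uv_dist_def)
  next
    case 2
    then show ?thesis by (intro exI[of _ 8]) (simp add: good_offset_def gp3_dist_uv uv_dist_def)
  next
    case 3
    then show ?thesis using uv_dist_bounds(1)[of "int n - 9"]
      by (intro exI[of _ 9]) (simp add: good_offset_def gp3_dist_uv uv_dist_def)
  next
    case 4
    then show ?thesis using good_offset_3l_minus_7 assms(3) by blast
  qed
qed

theorem proposition2p3:
  fixes n l :: nat
  assumes "n > 16" and "3 \<le> l" and "l < gdiam (gp_verts n) (gp_adj n 3)"
  shows "\<not> distance_balanced_at (gp_verts n) (gp_adj n 3) l"
proof
  assume balanced: "distance_balanced_at (gp_verts n) (gp_adj n 3) l"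
  have n: "17 \<le> n" using assms(1) by simp
  have "int l < gp3_diam_bound n" using gdiam_gp3_le[of n] n assms(3) by linarith
  then obtain j where j: "good_offset j" "2 * j \<le> n" "gp3_dist n False True (int j) = int l"
    using good_offset_exists n assms(2) by blast
  then have V: "(False, 0) \<in> gp_verts n" "(True, j) \<in> gp_verts n" "j < n"
    using n by (auto simp: gp_verts_def good_offset_def)
  then have "gdist (gp_verts n) (gp_adj n 3) (False, 0) (True, j) = l"
    using gdist_gp3[of n "(False, 0)" "(True, j)"] j n by (simp add: offset_def)
  then have "card (Wset (gp_verts n) (gp_adj n 3) (False, 0) (True, j))
      = card (Wset (gp_verts n) (gp_adj n 3) (True, j) (False, 0))"
    using balanced V unfolding distance_balanced_at_def by blast
  then show False using card_Wset_diff_eq_defect_sum[of n j] defect_sum_neg[OF n j(1,2)] n V by simp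
qed

end
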